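(* Consider the randomized gossip model described in the context and assume A1, A2 and A4. If $$\sum_{k=0}^\infty \prod_{s=k(n-1)}^{(k+1)(n-1)-1} T_s(1-T_s)=\infty,$$ then global agreement convergence is achieved almost surely, i.e. $\mathbf P(\limsup_{k\to\infty}\mathcal H(k)=0)=1$ for all initial times and initial values.
   Context: Network with node set $\mathcal V=\{1,\dots,n\}$, $n\ge 3$. Let $A=[a_{ij}]$ be an $n\times n$ stochastic matrix; the underlying digraph $\mathcal G_0$ has an arc $(j,i)$ iff $a_{ij}>0$. At each time $k=0,1,2,\dots$, independently of the past and of node states, a node $i$ is drawn with probability $1/n$ and then the pair $(i,j)$ is selected with probability $a_{ij}$. Given that pair $(i,j)$ is selected at time $k$, independently of time, node states and pair selection, node $i$: with probability $\alpha$ (event $\mathscr A_{ij}(k)$) sets $x_i(k+1)=(1-T_k)x_i(k)+T_kx_j(k)$, $0<T_k\le1$; with probability $\beta$ (event $\mathscr N_{ij}(k)$) keeps its state; with probability $\gamma$ (event $\mathscr R_{ij}(k)$) sets $x_i(k+1)=(1+S_k)x_i(k)-S_kx_j(k)$, $S_k>0$; $\alpha+\beta+\gamma=1$. Node $j$ updates analogously according to events $\mathscr A_{ji}(k),\mathscr N_{ji}(k),\mathscr R_{ji}(k)$; other nodes keep their states. Start at time $k_0\ge0$ from $x(k_0)\in\mathbb R^n$. $\mathcal H(k)=\max_i x_i(k)-\min_i x_i(k)$. A1: $\mathcal G_0$ is weakly connected. A2: $\mathscr R_{ij}(k)$ has probability zero for all $(i,j)$, $k$. A4: $\mathscr A_{ij}(k)\cap\mathscr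 A_{ji}(k)$ has probability zero for all $(i,j)$, $k$. *)

theory Defs
  imports "HOL-Probability.Probability"
begin

text \<open>Nodes are 0,...,n-1 (instead of 1,...,n). A state is a function nat => real,
  only the values at indices below n are relevant.\<close>

datatype act = Att | Neu | Rep
  \<comment> \<open>Att: attraction (event A), Neu: neglect/keep (event N), Rep: repulsion (event R)\<close>

text \<open>The randomness at one time step: (i, j, event of node i, event of node j).\<close>
type_synonym step = "nat \<times> nat \<times> act \<times> act"

fun act_upd :: "real \<Rightarrow> real \<Rightarrow> act \<Rightarrow> real \<Rightarrow> real \<Rightarrow> real" where
  "act_upd t s Att xi xj = (1 - t) * xi + t * xj"
| "act_upd t s Neu xi xj = xi"
| "act_upd t s Rep xi xj = (1 + s) * xi - s * xj"

text \<open>One gossip update with weights t = T_k, s = S_k; all nodes other than i, j keep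
  their state. (If i = j both formulas give x_i.)\<close>
definition gossip_upd :: "real \<Rightarrow> real \<Rightarrow> step \<Rightarrow> (nat \<Rightarrow> real) \<Rightarrow> (nat \<Rightarrow> real)" where
  "gossip_upd t s st x = (case st of (i, j, ei, ej) \<Rightarrow>
      x(i := act_upd t s ei (x i) (x j), j := act_upd t s ej (x j) (x i)))"

text \<open>Trajectory started at time k0 from x0: the m-th element of the stream omega is the
  randomness used at time k0 + m; gossip_traj T S k0 x0 omega m is x(k0 + m).\<close>
fun gossip_traj :: "(nat \<Rightarrow> real) \<Rightarrow> (nat \<Rightarrow> real) \<Rightarrow> nat \<Rightarrow> (nat \<Rightarrow> real)
                     \<Rightarrow> step stream \<Rightarrow> nat \<Rightarrow> (nat \<Rightarrow> real)" where
  "gossip_traj T S k0 x0 \<omega> 0 = x0"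
| "gossip_traj T S k0 x0 \<omega> (Suc m) =
     gossip_upd (T (k0 + m)) (S (k0 + m)) (\<omega> !! m) (gossip_traj T S k0 x0 \<omega> m)"

text \<open>State at absolute time k \<ge> k0 (for k < k0 it is just x0; irrelevant for the limsup).\<close>
definition gossip_state :: "(nat \<Rightarrow> real) \<Rightarrow> (nat \<Rightarrow> real) \<Rightarrow> nat \<Rightarrow> (nat \<Rightarrow> real)
                     \<Rightarrow> step stream \<Rightarrow> nat \<Rightarrow> (nat \<Rightarrow> real)" where
  "gossip_state T S k0 x0 \<omega> k = gossip_traj T S k0 x0 \<omega> (k - k0)"

definition spread :: "nat \<Rightarrow> (nat \<Rightarrow> real) \<Rightarrow> real" where
  "spread n x = (MAX i\<in>{..<n}. x i) - (MIN i\<in>{..<n}. x i)"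

definition stochastic_matrix :: "nat \<Rightarrow> (nat \<Rightarrow> nat \<Rightarrow> real) \<Rightarrow> bool" where
  "stochastic_matrix n a \<longleftrightarrow>
     (\<forall>i<n. \<forall>j<n. a i j \<ge> 0) \<and> (\<forall>i<n. (\<Sum>j<n. a i j) = 1)"

definition arcs :: "nat \<Rightarrow> (nat \<Rightarrow> nat \<Rightarrow> real) \<Rightarrow> (nat \<times> nat) set" where
  "arcs n a = {(j, i). i < n \<and> j < n \<and> a i j > 0}"

definition weakly_connected :: "nat \<Rightarrow> (nat \<Rightarrow> nat \<Rightarrow> real) \<Rightarrow> bool" where
  "weakly_connected n a \<longleftrightarrow>
     (\<forall>u<n. \<forall>v<n. (u, v) \<in> (arcs n a \<union> (arcs n a)\<inverse>)\<^sup>*)"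

end

theory Submission
  imports Defs
begin

text \<open>
  With no repulsion every update is a convex combination, so the spread \<open>H = max - min\<close> never
  increases. Fix a window of \<open>n - 1\<close> steps starting from a state of spread \<open>H\<close>. Starting from
  \<open>R = {argmax}\<close>, weak connectivity provides at each step an arc between \<open>R\<close> and its complement,
  and one attraction step pulls the outside endpoint towards the inside one; after \<open>n - 1\<close> such
  steps every node has been lifted above \<open>min + (\<Prod>T) H\<close>. This particular sequence of steps has
  probability at least \<open>p ^ (n - 1)\<close>, \<open>p\<close> the least positive step probability, so the expected spread
  contracts by the factor \<open>1 - p ^ (n - 1) \<Prod>T\<close> per window. Since \<open>T (1 - T) \<le> T\<close>, the hypothesis makes
  \<open>\<Sum> \<Prod>T\<close> diverge, hence the product of these factors tends to \<open>0\<close>; the almost sure limit of the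
  monotone spread has expectation \<open>0\<close>, so it vanishes almost surely.
\<close>

instance act :: countable by countable_datatype

lemma measurable_stake_pmf:
  "stake m \<in> measurable (stream_space (measure_pmf (D :: 'a::countable pmf))) (count_space UNIV)"
  using measurable_cong_sets[OF sets_stream_space_cong[OF sets_measure_pmf_count_space] refl]
    measurable_stake
  by blast

lemma measurable_stake_pmf_comp:
  "(\<lambda>\<omega>. g (stake m \<omega>)) \<in> borel_measurable (stream_space (measure_pmf (D :: 'a::countable pmf)))"
  by (rule measurable_compose[OF measurable_stake_pmf]) simp

lemma nn_integral_stream_space_stake_Suc:
  fixes D :: "'a::countable pmf"
  shows "(\<integral>\<^sup>+\<omega>. h (stake (Suc m) \<omega>) \<partial>stream_space D)
       = (\<integral>\<^sup>+s. (\<integral>\<^sup>+\<omega>. h (s # stake m \<omega>) \<partial>stream_space D) \<partial>D)"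
  by (subst prob_space.nn_integral_stream_space[OF prob_space_measure_pmf])
    (auto intro: measurable_stake_pmf_comp)

lemma nn_integral_stream_space_stake_add:
  fixes D :: "'a::countable pmf"
  shows "(\<integral>\<^sup>+\<omega>. h (stake (m + l) \<omega>) \<partial>stream_space D)
       = (\<integral>\<^sup>+\<omega>. (\<integral>\<^sup>+\<omega>'. h (stake m \<omega> @ stake l \<omega>') \<partial>stream_space D) \<partial>stream_space D)"
proof (induction m arbitrary: h)
  case 0
  interpret prob_space "stream_space D"
    by (rule prob_space.prob_space_stream_space[OF prob_space_measure_pmf])
  show ?case by (simp add: emeasure_space_1)
next
  case (Suc m)
  have "(\<integral>\<^sup>+\<omega>. h (stake (Suc m + l) \<omega>) \<partial>stream_space D)
      = (\<integral>\<^sup>+s. (\<integral>\<^sup>+\<omega>. h (s # stake (m + l) \<omega>) \<partial>stream_space D) \<partial>D)"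
    using nn_integral_stream_space_stake_Suc[where m = "m + l"] by simp
  also have "\<dots> = (\<integral>\<^sup>+s. (\<integral>\<^sup>+\<omega>. (\<integral>\<^sup>+\<omega>'. h (s # stake m \<omega> @ stake l \<omega>')
                      \<partial>stream_space D) \<partial>stream_space D) \<partial>D)"
    using Suc[of "\<lambda>xs. h (s # xs)" for s] by simp
  also have "\<dots> = (\<integral>\<^sup>+\<omega>. (\<integral>\<^sup>+\<omega>'. h (stake (Suc m) \<omega> @ stake l \<omega>')
                      \<partial>stream_space D) \<partial>stream_space D)"
    using nn_integral_stream_space_stake_Suc[where m = m and
        h = "\<lambda>xs. \<integral>\<^sup>+\<omega>'. h (xs @ stake l \<omega>') \<partial>stream_space D"] by simp
  finally show ?case .
qed

lemma emeasure_stream_space_stake_eq: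
  fixes D :: "'a::countable pmf"
  shows "emeasure (stream_space D) {\<omega>. stake (length \<sigma>) \<omega> = \<sigma>} = (\<Prod>s\<leftarrow>\<sigma>. pmf D s)"
proof -
  have "(\<integral>\<^sup>+\<omega>. indicator {\<sigma>} (stake (length \<sigma>) \<omega>) \<partial>stream_space D) = (\<Prod>s\<leftarrow>\<sigma>. pmf D s)"
  proof (induction \<sigma>)
    case Nil
    interpret prob_space "stream_space D"
      by (rule prob_space.prob_space_stream_space[OF prob_space_measure_pmf])
    show ?case by (simp add: emeasure_space_1)
  next
    case (Cons a \<sigma>)
    have "(\<integral>\<^sup>+\<omega>. indicator {a # \<sigma>} (stake (length (a # \<sigma>)) \<omega>) \<partial>stream_space D)
        = (\<integral>\<^sup>+s. (\<Prod>s\<leftarrow>\<sigma>. pmf D s) * indicator {a} s \<partial>D)"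
      unfolding length_Cons nn_integral_stream_space_stake_Suc
      by (rule nn_integral_cong) (auto simp: Cons.IH[symmetric] split: split_indicator
          intro!: nn_integral_cong)
    also have "\<dots> = (\<Prod>s\<leftarrow>a # \<sigma>. pmf D s)"
      by (simp add: nn_integral_cmult_indicator emeasure_pmf_single ennreal_mult' mult.commute
          prod_list_nonneg)
    finally show ?case .
  qed
  moreover have "{\<omega>. stake (length \<sigma>) \<omega> = \<sigma>} \<in> sets (stream_space D)"
    using measurable_sets[OF measurable_stake_pmf, of "{\<sigma>}" "length \<sigma>" D]
    by (simp add: vimage_def space_stream_space)
  ultimately show ?thesis
    by (simp add: nn_integral_indicator[symmetric] indicator_def)
qed

lemma Min_lessThan_le: "i < (n::nat) \<Longrightarrow> (MIN i\<in>{..<n}. x i) \<le> x i"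
  by (rule Min_le) auto

lemma Max_lessThan_ge: "i < (n::nat) \<Longrightarrow> x i \<le> (MAX i\<in>{..<n}. x i)"
  by (rule Max_ge) auto

lemma spread_nonneg: "0 < n \<Longrightarrow> 0 \<le> spread n x"
  using Min_lessThan_le[of 0 n x] Max_lessThan_ge[of 0 n x] unfolding spread_def by linarith

lemma spread_le_of_bounds:
  assumes "0 < n" "\<And>i. i < n \<Longrightarrow> lo \<le> x i \<and> x i \<le> hi"
  shows "spread n x \<le> hi - lo"
proof -
  have "(MAX i\<in>{..<n}. x i) \<le> hi" using assms by (subst Max_le_iff) auto
  moreover have "lo \<le> (MIN i\<in>{..<n}. x i)" using assms by (subst Min_ge_iff) auto
  ultimately show ?thesis unfolding spread_def by linarith
qed

fun gossip_run :: "(nat \<Rightarrow> real) \<Rightarrow> (nat \<Rightarrow> real) \<Rightarrow> nat \<Rightarrow> (nat \<Rightarrow> real) \<Rightarrow> step list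
                     \<Rightarrow> (nat \<Rightarrow> real)" where
  "gossip_run T S t x [] = x"
| "gossip_run T S t x (s # \<sigma>) = gossip_run T S (Suc t) (gossip_upd (T t) (S t) s x) \<sigma>"

lemma gossip_run_append:
  "gossip_run T S t x (\<sigma> @ \<tau>) = gossip_run T S (t + length \<sigma>) (gossip_run T S t x \<sigma>) \<tau>"
  by (induction \<sigma> arbitrary: t x) auto

lemma gossip_traj_eq_run: "gossip_traj T S t x \<omega> m = gossip_run T S t x (stake m \<omega>)"
proof (induction m arbitrary: t x \<omega>)
  case (Suc m)
  have "gossip_traj T S t x (s ## \<omega>') (Suc k)
      = gossip_traj T S (Suc t) (gossip_upd (T t) (S t) s x) \<omega>' k" for s \<omega>' k
    by (induction k) auto
  then have "gossip_traj T S t x \<omega> (Suc m)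
      = gossip_traj T S (Suc t) (gossip_upd (T t) (S t) (shd \<omega>) x) (stl \<omega>) m"
    by (metis stream.collapse)
  then show ?case using Suc by simp
qed simp

definition nonrepulsive_step :: "nat \<Rightarrow> step \<Rightarrow> bool" where
  "nonrepulsive_step n s \<longleftrightarrow> (case s of (i, j, ei, ej) \<Rightarrow> i < n \<and> j < n \<and> ei \<noteq> Rep \<and> ej \<noteq> Rep)"

lemma act_upd_between:
  assumes "e \<noteq> Rep" "0 \<le> t" "t \<le> 1" "lo \<le> a" "a \<le> hi" "lo \<le> b" "b \<le> hi"
  shows "lo \<le> act_upd t s e a b \<and> act_upd t s e a b \<le> hi"
proof (cases e)
  case Att
  have "(1 - t) * lo \<le> (1 - t) * a" "(1 - t) * a \<le> (1 - t) * hi" "t * lo \<le> t * b" "t * b \<le> t * hi"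
    using assms by (auto intro: mult_left_mono)
  then show ?thesis using Att by (simp add: algebra_simps)
qed (use assms in auto)

lemma gossip_upd_between:
  assumes "nonrepulsive_step n s" "0 \<le> t" "t \<le> 1" "\<And>i. i < n \<Longrightarrow> lo \<le> x i \<and> x i \<le> hi" "k < n"
  shows "lo \<le> gossip_upd t u s x k \<and> gossip_upd t u s x k \<le> hi"
proof -
  obtain i j ei ej where s: "s = (i, j, ei, ej)" by (cases s) auto
  then have ij: "i < n" "j < n" "ei \<noteq> Rep" "ej \<noteq> Rep"
    using assms(1) by (auto simp: nonrepulsive_step_def)
  have "lo \<le> act_upd t u ei (x i) (x j) \<and> act_upd t u ei (x i) (x j) \<le> hi"
    "lo \<le> act_upd t u ej (x j) (x i) \<and> act_upd t u ej (x j) (x i) \<le> hi"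
    using ij assms(4)[of i] assms(4)[of j] act_upd_between[OF _ assms(2,3)] by blast+
  then show ?thesis using assms(4,5) unfolding s gossip_upd_def by auto
qed

lemma gossip_run_between:
  assumes "\<forall>s\<in>set \<sigma>. nonrepulsive_step n s" "\<And>k. 0 \<le> T k \<and> T k \<le> 1"
    "\<And>i. i < n \<Longrightarrow> lo \<le> x i \<and> x i \<le> hi" "k < n"
  shows "lo \<le> gossip_run T S t x \<sigma> k \<and> gossip_run T S t x \<sigma> k \<le> hi"
  using assms(1,3,4)
proof (induction \<sigma> arbitrary: t x)
  case (Cons s \<sigma>)
  have "lo \<le> gossip_upd (T t) (S t) s x i \<and> gossip_upd (T t) (S t) s x i \<le> hi" if "i < n" for i
    using Cons.prems(1,2) assms(2)[of t] that by (intro gossip_upd_between) auto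
  then show ?case using Cons by simp
qed simp

lemma spread_gossip_run_le:
  assumes "0 < n" "\<forall>s\<in>set \<sigma>. nonrepulsive_step n s" "\<And>k. 0 \<le> T k \<and> T k \<le> 1"
  shows "spread n (gossip_run T S t x \<sigma>) \<le> spread n x"
  unfolding spread_def[of n x]
  using assms gossip_run_between[OF assms(2,3), of "MIN i\<in>{..<n}. x i" x "MAX i\<in>{..<n}. x i"]
  by (intro spread_le_of_bounds) (auto intro: Min_lessThan_le Max_lessThan_ge)

lemma gossip_upd_attract:
  assumes "u \<noteq> v"
  shows "gossip_upd t r (u, v, Att, Neu) y = y(u := (1 - t) * y u + t * y v)"
    and "gossip_upd t r (v, u, Neu, Att) y = y(u := (1 - t) * y u + t * y v)"
  using assms by (auto simp: gossip_upd_def fun_eq_iff)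

lemma rtrancl_exits_set:
  "(x, y) \<in> Q\<^sup>* \<Longrightarrow> x \<in> R \<Longrightarrow> y \<notin> R \<Longrightarrow> \<exists>u v. (u, v) \<in> Q \<and> u \<in> R \<and> v \<notin> R"
  by (induction rule: rtrancl_induct) auto

lemma power_le_prod_list:
  "\<forall>s\<in>set \<sigma>. p \<le> f s \<Longrightarrow> 0 \<le> (p::real) \<Longrightarrow> p ^ length \<sigma> \<le> (\<Prod>s\<leftarrow>\<sigma>. f s)"
  by (induction \<sigma>) (auto intro: mult_mono order_trans)

lemma prod_one_minus_LIMSEQ_zero:
  fixes a :: "nat \<Rightarrow> real"
  assumes "\<And>j. 0 \<le> a j" "\<And>j. a j \<le> 1" "\<not> summable a"
  shows "(\<lambda>N. \<Prod>j<N. 1 - a j) \<longlonglongrightarrow> 0"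
proof (rule LIMSEQ_I)
  fix e :: real assume "0 < e"
  obtain N where N: "- ln e < (\<Sum>j<N. a j)"
    using assms(1,3) summableI_nonneg_bounded[of a "- ln e"] by (meson not_le)
  have "\<bar>\<Prod>j<M. 1 - a j\<bar> < e" if "N \<le> M" for M
  proof -
    have "\<bar>\<Prod>j<M. 1 - a j\<bar> = (\<Prod>j<M. 1 - a j)"
      using assms(2) by (intro abs_of_nonneg prod_nonneg) (simp add: algebra_simps)
    also have "\<dots> \<le> (\<Prod>j<M. exp (- a j))"
      using assms(2) exp_ge_add_one_self[of "- a j" for j] by (intro prod_mono) auto
    also have "\<dots> = exp (- (\<Sum>j<M. a j))"
      by (simp add: exp_sum[symmetric] sum_negf)
    also have "\<dots> \<le> exp (- (\<Sum>j<N. a j))"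
      using that assms(1) by (simp add: sum_mono2)
    also have "\<dots> < e"
      using N \<open>0 < e\<close> by (metis exp_less_mono exp_ln minus_less_iff)
    finally show ?thesis .
  qed
  then show "\<exists>N. \<forall>M\<ge>N. norm ((\<Prod>j<M. 1 - a j) - 0) < e" by auto
qed

lemma pmf_le_pmf_map_pmf: "pmf p x \<le> pmf (map_pmf f p) (f x)"
proof -
  have "pmf p x = measure p {x}" by (simp add: measure_pmf_single)
  also have "\<dots> \<le> measure p (f -` {f x})" by (rule measure_pmf.finite_measure_mono) auto
  also have "\<dots> = pmf (map_pmf f p) (f x)" by (simp add: pmf_map)
  finally show ?thesis .
qed

lemma pmf_attraction_eq_marginal:
  assumes "pmf J (Att, Att) = 0" "pmf (map_pmf fst J) Rep = 0" "pmf (map_pmf snd J) Rep = 0"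
  shows "pmf J (Att, Neu) = pmf (map_pmf fst J) Att" "pmf J (Neu, Att) = pmf (map_pmf snd J) Att"
proof -
  have "pmf J (Att, Rep) = 0"
    using pmf_le_pmf_map_pmf[of J "(Att, Rep)" snd] pmf_nonneg[of J "(Att, Rep)"] assms(3) by simp
  moreover have "pmf J (Rep, Att) = 0"
    using pmf_le_pmf_map_pmf[of J "(Rep, Att)" fst] pmf_nonneg[of J "(Rep, Att)"] assms(2) by simp
  moreover have "fst -` {Att} = {(Att, Att), (Att, Neu), (Att, Rep)}"
    "snd -` {Att} = {(Att, Att), (Neu, Att), (Rep, Att)}"
    by (auto simp: vimage_def) (metis act.exhaust)+
  ultimately show "pmf J (Att, Neu) = pmf (map_pmf fst J) Att" "pmf J (Neu, Att) = pmf (map_pmf snd J) Att"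
    using assms(1) by (simp_all add: pmf_map measure_measure_pmf_finite)
qed

lemma not_Rep_of_marginal:
  assumes "pmf (map_pmf f J) Rep = 0" "e \<in> set_pmf J"
  shows "f e \<noteq> Rep"
  using assms by (metis imageI set_map_pmf set_pmf_iff)

locale gossip_model =
  fixes n :: nat and a :: "nat \<Rightarrow> nat \<Rightarrow> real"
    and J :: "(act \<times> act) pmf" and D :: "step pmf"
    and T S :: "nat \<Rightarrow> real"
  assumes n_ge_2: "2 \<le> n"
    and pmf_D: "\<And>i j ei ej. pmf D (i, j, ei, ej) =
                 (if i < n \<and> j < n then 1 / real n * a i j * pmf J (ei, ej) else 0)"
    and J_nonrepulsive: "\<And>e. e \<in> set_pmf J \<Longrightarrow> fst e \<noteq> Rep \<and> snd e \<noteq> Rep"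
    and J_Att_Neu: "0 < pmf J (Att, Neu)" and J_Neu_Att: "0 < pmf J (Neu, Att)"
    and T_range: "\<And>k. 0 \<le> T k \<and> T k \<le> 1"
    and connected: "weakly_connected n a"
begin

lemma n_pos: "0 < n" using n_ge_2 by simp

lemma nonrepulsive_step_of_support:
  assumes "s \<in> set_pmf D"
  shows "nonrepulsive_step n s"
proof -
  obtain i j ei ej where s: "s = (i, j, ei, ej)" by (cases s) auto
  have "0 < pmf D s" using assms by (simp add: set_pmf_iff order.strict_iff_order)
  then have "i < n \<and> j < n" "(ei, ej) \<in> set_pmf J"
    unfolding s pmf_D by (auto simp: set_pmf_iff split: if_splits)
  then show ?thesis using J_nonrepulsive unfolding s nonrepulsive_step_def by fastforce
qed

lemma finite_support: "finite (set_pmf D)"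
proof (rule finite_subset)
  have "e = Att \<or> e = Neu \<or> e = Rep" for e by (cases e) auto
  then have "- {Rep} = {Att, Neu}" by blast
  then show "finite ({..<n} \<times> {..<n} \<times> (- {Rep}) \<times> (- {Rep}))" by simp
  show "set_pmf D \<subseteq> {..<n} \<times> {..<n} \<times> (- {Rep}) \<times> (- {Rep})"
    using nonrepulsive_step_of_support by (auto simp: nonrepulsive_step_def)
qed

definition p_min :: real where
  "p_min = Min (pmf D ` set_pmf D)"

lemma p_min_le: "s \<in> set_pmf D \<Longrightarrow> p_min \<le> pmf D s"
  unfolding p_min_def using finite_support by simp

lemma p_min_pos: "0 < p_min"
  unfolding p_min_def using finite_support set_pmf_not_empty[of D]
  by (subst Min_gr_iff) (auto simp: set_pmf_iff pmf_nonneg order.strict_iff_order)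

lemma p_min_le_1: "p_min \<le> 1"
  using set_pmf_not_empty[of D] p_min_le pmf_le_1[of D] by (metis all_not_in_conv order_trans)

lemma attraction_step:
  assumes "u < n" "v < n" "u \<noteq> v" "0 < a u v \<or> 0 < a v u"
  obtains s where "s \<in> set_pmf D" "gossip_upd t r s y = y(u := (1 - t) * y u + t * y v)"
proof (cases "0 < a u v")
  case True
  then have "(u, v, Att, Neu) \<in> set_pmf D" using assms J_Att_Neu n_pos by (simp add: set_pmf_iff pmf_D)
  then show ?thesis using that gossip_upd_attract(1)[OF assms(3)] by blast
next
  case False
  then have "(v, u, Neu, Att) \<in> set_pmf D"
    using assms J_Neu_Att n_pos by (simp add: set_pmf_iff pmf_D)
  then show ?thesis using that gossip_upd_attract(2)[OF assms(3)] by blast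
qed

lemma edge_leaving:
  assumes "R \<subseteq> {..<n}" "r \<in> R" "w < n" "w \<notin> R"
  obtains u v where "u < n" "u \<notin> R" "v \<in> R" "0 < a u v \<or> 0 < a v u"
proof -
  have "(r, w) \<in> (arcs n a \<union> (arcs n a)\<inverse>)\<^sup>*"
    using connected assms unfolding weakly_connected_def by auto
  then obtain p q where "(p, q) \<in> arcs n a \<union> (arcs n a)\<inverse>" "p \<in> R" "q \<notin> R"
    using rtrancl_exits_set[OF _ assms(2,4)] by blast
  then show ?thesis using that unfolding arcs_def by auto
qed

lemma lift_lower_bound:
  assumes "R \<subseteq> {..<n}" "card R + k = n" "R \<noteq> {}" "0 \<le> c"
    "\<And>w. w < n \<Longrightarrow> lo \<le> y w" "\<And>w. w \<in> R \<Longrightarrow> lo + c \<le> y w"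
  shows "\<exists>\<sigma>. length \<sigma> = k \<and> set \<sigma> \<subseteq> set_pmf D \<and>
           (\<forall>w<n. lo + (\<Prod>s\<in>{t..<t + k}. T s) * c \<le> gossip_run T S t y \<sigma> w)"
  using assms
proof (induction k arbitrary: R y t c)
  case 0
  then have "R = {..<n}" by (intro card_subset_eq) simp_all
  then show ?case using "0.prems"(6) by (intro exI[of _ "[]"]) auto
next
  case (Suc k)
  have "finite R" using Suc.prems(1) finite_subset by blast
  then have "\<not> {..<n} \<subseteq> R" using Suc.prems(2) card_mono[of R "{..<n}"] by auto
  then obtain w where "w < n" "w \<notin> R" by blast
  moreover obtain r where "r \<in> R" using Suc.prems(3) by auto
  ultimately obtain u v where uv: "u < n" "u \<notin> R" "v \<in> R" "0 < a u v \<or> 0 < a v u"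
    using edge_leaving[OF Suc.prems(1)] by metis
  then have "v < n" "u \<noteq> v" using Suc.prems(1) by auto
  define y' where "y' = y(u := (1 - T t) * y u + T t * y v)"
  obtain s where s: "s \<in> set_pmf D" "gossip_upd (T t) (S t) s y = y'"
    using attraction_step[OF uv(1) \<open>v < n\<close> \<open>u \<noteq> v\<close> uv(4)] unfolding y'_def by metis
  have T: "0 \<le> T t" "T t \<le> 1" using T_range[of t] by auto
  have "(1 - T t) * lo + T t * (lo + c) \<le> (1 - T t) * y u + T t * y v"
    using T Suc.prems(5)[OF uv(1)] Suc.prems(6)[OF uv(3)] by (intro add_mono mult_left_mono) auto
  then have lift_u: "lo + T t * c \<le> y' u" unfolding y'_def by (simp add: algebra_simps)
  have "0 \<le> T t * c" "T t * c \<le> c" using T Suc.prems(4) by (simp_all add: mult_left_le_one_le)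
  then have "lo \<le> y' w" if "w < n" for w
    using lift_u Suc.prems(5)[OF that] by (cases "w = u") (auto simp: y'_def)
  moreover have "lo + T t * c \<le> y' w" if "w \<in> insert u R" for w
    using lift_u Suc.prems(6)[of w] that \<open>T t * c \<le> c\<close> by (cases "w = u") (auto simp: y'_def)
  ultimately have "\<exists>\<sigma>. length \<sigma> = k \<and> set \<sigma> \<subseteq> set_pmf D \<and>
      (\<forall>w<n. lo + (\<Prod>s\<in>{Suc t..<Suc t + k}. T s) * (T t * c) \<le> gossip_run T S (Suc t) y' \<sigma> w)"
    using Suc.prems(1,2) uv(1,2) \<open>finite R\<close> \<open>0 \<le> T t * c\<close> by (intro Suc.IH[of "insert u R"]) auto
  then obtain \<sigma> where \<sigma>: "length \<sigma> = k" "set \<sigma> \<subseteq> set_pmf D"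
    "\<forall>w<n. lo + (\<Prod>s\<in>{Suc t..<Suc t + k}. T s) * (T t * c) \<le> gossip_run T S (Suc t) y' \<sigma> w"
    by blast
  have "(\<Prod>s\<in>{t..<t + Suc k}. T s) * c = (\<Prod>s\<in>{Suc t..<Suc t + k}. T s) * (T t * c)"
    by (simp add: prod.atLeast_Suc_lessThan)
  then show ?case using \<sigma> s by (intro exI[of _ "s # \<sigma>"]) auto
qed

definition window_prod :: "nat \<Rightarrow> real" where
  "window_prod t = (\<Prod>s\<in>{t..<t + (n - 1)}. T s)"

lemma window_prod_nonneg: "0 \<le> window_prod t"
  unfolding window_prod_def using T_range by (simp add: prod_nonneg)

lemma window_prod_le_1: "window_prod t \<le> 1"
  unfolding window_prod_def using T_range by (simp add: prod_le_1)

lemma contracting_window: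
  obtains \<sigma> where "length \<sigma> = n - 1" "set \<sigma> \<subseteq> set_pmf D"
    "spread n (gossip_run T S t y \<sigma>) \<le> (1 - window_prod t) * spread n y"
proof -
  define lo where "lo = (MIN i\<in>{..<n}. y i)"
  define hi where "hi = (MAX i\<in>{..<n}. y i)"
  have "hi \<in> y ` {..<n}" unfolding hi_def using n_pos by (intro Max_in) auto
  then obtain r where r: "r < n" "y r = hi" by auto
  have spread_y: "spread n y = hi - lo" unfolding spread_def lo_def hi_def ..
  have bounds: "\<And>i. i < n \<Longrightarrow> lo \<le> y i \<and> y i \<le> hi"
    unfolding lo_def hi_def by (simp add: Min_lessThan_le Max_lessThan_ge)
  obtain \<sigma> where \<sigma>: "length \<sigma> = n - 1" "set \<sigma> \<subseteq> set_pmf D"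
    "\<forall>w<n. lo + window_prod t * (hi - lo) \<le> gossip_run T S t y \<sigma> w"
    using lift_lower_bound[of "{r}" "n - 1" "hi - lo" lo y t] r n_pos bounds spread_nonneg[of n y]
    unfolding window_prod_def spread_y by auto
  have "\<forall>s\<in>set \<sigma>. nonrepulsive_step n s" using \<sigma>(2) nonrepulsive_step_of_support by blast
  then have "gossip_run T S t y \<sigma> i \<le> hi" if "i < n" for i
    using gossip_run_between[where T = T and x = y and lo = lo and hi = hi and k = i] T_range bounds that
    by blast
  then have "spread n (gossip_run T S t y \<sigma>) \<le> hi - (lo + window_prod t * (hi - lo))"
    using \<sigma>(3) n_pos by (intro spread_le_of_bounds) auto
  then show ?thesis using that \<sigma> by (simp add: spread_y algebra_simps)
qed

abbreviation paths :: "step stream measure" where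
  "paths \<equiv> stream_space (measure_pmf D)"

sublocale paths: prob_space paths
  by (rule prob_space.prob_space_stream_space[OF prob_space_measure_pmf])

lemma AE_paths_support: "AE \<omega> in paths. \<forall>m. set (stake m \<omega>) \<subseteq> set_pmf D"
proof -
  have "AE \<omega> in paths. stream_all (\<lambda>s. s \<in> set_pmf D) \<omega>"
    by (rule prob_space.AE_stream_all[OF prob_space_measure_pmf]) (auto simp: AE_measure_pmf)
  then show ?thesis
    by eventually_elim (metis Un_upper1 sset_shift stake_sdrop stream_all_iff subset_trans subsetI)
qed

lemma spread_gossip_run_support:
  "set \<sigma> \<subseteq> set_pmf D \<Longrightarrow> spread n (gossip_run T S t x \<sigma>) \<le> spread n x"
  using n_pos T_range nonrepulsive_step_of_support by (intro spread_gossip_run_le) auto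

definition expected_spread :: "nat \<Rightarrow> (nat \<Rightarrow> real) \<Rightarrow> nat \<Rightarrow> ennreal" where
  "expected_spread t x m = (\<integral>\<^sup>+\<omega>. spread n (gossip_run T S t x (stake m \<omega>)) \<partial>paths)"

lemma expected_spread_le: "expected_spread t x m \<le> spread n x"
proof -
  have "expected_spread t x m \<le> (\<integral>\<^sup>+\<omega>. spread n x \<partial>paths)"
    unfolding expected_spread_def using AE_paths_support
    by (intro nn_integral_mono_AE) (auto elim!: eventually_mono intro: ennreal_leI spread_gossip_run_support)
  then show ?thesis by (simp add: paths.emeasure_space_1)
qed

lemma expected_spread_add:
  "expected_spread t x (m + l)
     = (\<integral>\<^sup>+\<omega>. expected_spread (t + m) (gossip_run T S t x (stake m \<omega>)) l \<partial>paths)"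
  unfolding expected_spread_def
  by (subst nn_integral_stream_space_stake_add) (simp add: gossip_run_append)

lemma expected_spread_path_bound:
  assumes "set \<sigma> \<subseteq> set_pmf D" "length \<sigma> = m"
  shows "expected_spread t x m
           + ennreal ((\<Prod>s\<leftarrow>\<sigma>. pmf D s) * (spread n x - spread n (gossip_run T S t x \<sigma>)))
         \<le> spread n x"
proof -
  define \<delta> where "\<delta> = spread n x - spread n (gossip_run T S t x \<sigma>)"
  define C where "C = {\<omega>. stake m \<omega> = \<sigma>}"
  have "0 \<le> \<delta>" using spread_gossip_run_support[OF assms(1)] unfolding \<delta>_def by simp
  have C: "C \<in> sets paths" "emeasure paths C = (\<Prod>s\<leftarrow>\<sigma>. pmf D s)"
    using measurable_sets[OF measurable_stake_pmf, of "{\<sigma>}" m D] emeasure_stream_space_stake_eq[of D \<sigma>]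
    unfolding C_def assms(2) by (simp_all add: vimage_def space_stream_space)
  have "AE \<omega> in paths. ennreal (spread n (gossip_run T S t x (stake m \<omega>))) + ennreal \<delta> * indicator C \<omega>
                          \<le> ennreal (spread n x)"
    using AE_paths_support
  proof eventually_elim
    case (elim \<omega>)
    show ?case
    proof (cases "\<omega> \<in> C")
      case True
      then show ?thesis
        using \<open>0 \<le> \<delta>\<close> spread_nonneg[OF n_pos] by (simp add: C_def \<delta>_def ennreal_plus[symmetric])
    qed (use elim spread_gossip_run_support in \<open>auto intro: ennreal_leI\<close>)
  qed
  then have "(\<integral>\<^sup>+\<omega>. ennreal (spread n (gossip_run T S t x (stake m \<omega>))) + ennreal \<delta> * indicator C \<omega> \<partial>paths)
               \<le> (\<integral>\<^sup>+\<omega>. spread n x \<partial>paths)"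
    by (rule nn_integral_mono_AE)
  moreover have "(\<integral>\<^sup>+\<omega>. ennreal (spread n (gossip_run T S t x (stake m \<omega>))) + ennreal \<delta> * indicator C \<omega> \<partial>paths)
      = expected_spread t x m + ennreal \<delta> * (\<Prod>s\<leftarrow>\<sigma>. pmf D s)"
    unfolding expected_spread_def using C
    by (subst nn_integral_add) (auto intro: measurable_stake_pmf_comp simp: nn_integral_cmult_indicator)
  moreover have "0 \<le> (\<Prod>s\<leftarrow>\<sigma>. pmf D s)" by (rule prod_list_nonneg) auto
  ultimately show ?thesis
    using ennreal_mult[OF _ \<open>0 \<le> \<delta>\<close>, of "\<Prod>s\<leftarrow>\<sigma>. pmf D s"]
    by (simp add: paths.emeasure_space_1 \<delta>_def mult.commute)
qed

lemma expected_spread_window: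
  "expected_spread t y (n - 1) \<le> ennreal ((1 - p_min ^ (n - 1) * window_prod t) * spread n y)"
proof -
  obtain \<sigma> where \<sigma>: "length \<sigma> = n - 1" "set \<sigma> \<subseteq> set_pmf D"
    "spread n (gossip_run T S t y \<sigma>) \<le> (1 - window_prod t) * spread n y"
    by (rule contracting_window)
  define gain where "gain = p_min ^ (n - 1) * (window_prod t * spread n y)"
  have "0 \<le> gain" unfolding gain_def
    using p_min_pos window_prod_nonneg spread_nonneg[OF n_pos] by simp
  have "\<forall>s\<in>set \<sigma>. p_min \<le> pmf D s" using \<sigma>(2) p_min_le by blast
  then have "p_min ^ (n - 1) \<le> (\<Prod>s\<leftarrow>\<sigma>. pmf D s)"
    using \<sigma>(1) p_min_pos power_le_prod_list[of \<sigma> p_min "pmf D"] by simp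
  moreover have "0 \<le> (\<Prod>s\<leftarrow>\<sigma>. pmf D s)" by (rule prod_list_nonneg) auto
  ultimately have "gain \<le> (\<Prod>s\<leftarrow>\<sigma>. pmf D s) * (spread n y - spread n (gossip_run T S t y \<sigma>))"
    unfolding gain_def using \<sigma>(3) p_min_pos window_prod_nonneg spread_nonneg[OF n_pos]
    by (intro mult_mono) (auto simp: algebra_simps)
  then have "expected_spread t y (n - 1) + ennreal gain \<le> spread n y"
    using expected_spread_path_bound[OF \<sigma>(2,1), of t y] by (meson add_left_mono ennreal_leI order_trans)
  then have "expected_spread t y (n - 1) \<le> ennreal (spread n y) - ennreal gain"
    by (simp add: ennreal_le_minus_iff)
  also have "\<dots> = ennreal ((1 - p_min ^ (n - 1) * window_prod t) * spread n y)"
    using \<open>0 \<le> gain\<close> by (simp add: ennreal_minus gain_def algebra_simps)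
  finally show ?thesis .
qed

lemma window_factor_nonneg: "0 \<le> 1 - p_min ^ (n - 1) * window_prod t"
  using p_min_pos p_min_le_1 window_prod_nonneg[of t] window_prod_le_1[of t]
  by (simp add: mult_le_one power_le_one)

lemma expected_spread_windows:
  "expected_spread t x (m + d * (n - 1))
     \<le> ennreal (spread n x * (\<Prod>j<d. 1 - p_min ^ (n - 1) * window_prod (t + m + j * (n - 1))))"
proof (induction d)
  case 0
  then show ?case using expected_spread_le by simp
next
  case (Suc d)
  define M where "M = m + d * (n - 1)"
  define c where "c = 1 - p_min ^ (n - 1) * window_prod (t + M)"
  have "0 \<le> c" unfolding c_def by (rule window_factor_nonneg)
  have "expected_spread t x (m + Suc d * (n - 1))
      = (\<integral>\<^sup>+\<omega>. expected_spread (t + M) (gossip_run T S t x (stake M \<omega>)) (n - 1) \<partial>paths)"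
    unfolding expected_spread_add[symmetric] M_def by (simp add: ac_simps)
  also have "\<dots> \<le> (\<integral>\<^sup>+\<omega>. c * ennreal (spread n (gossip_run T S t x (stake M \<omega>))) \<partial>paths)"
    using expected_spread_window ennreal_mult[OF \<open>0 \<le> c\<close> spread_nonneg[OF n_pos]]
    unfolding c_def by (intro nn_integral_mono) metis
  also have "\<dots> = c * expected_spread t x M"
    unfolding expected_spread_def by (rule nn_integral_cmult) (rule measurable_stake_pmf_comp)
  also have "\<dots> \<le> c * ennreal (spread n x *
                    (\<Prod>j<d. 1 - p_min ^ (n - 1) * window_prod (t + m + j * (n - 1))))"
    using Suc.IH unfolding M_def by (rule mult_left_mono) simp
  also have "\<dots> = ennreal (c * (spread n x *
                    (\<Prod>j<d. 1 - p_min ^ (n - 1) * window_prod (t + m + j * (n - 1)))))"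
    by (rule ennreal_mult'[OF \<open>0 \<le> c\<close>, symmetric])
  also have "\<dots> = ennreal (spread n x *
                    (\<Prod>j<Suc d. 1 - p_min ^ (n - 1) * window_prod (t + m + j * (n - 1))))"
    unfolding c_def M_def by (simp add: ac_simps)
  finally show ?case .
qed

lemma limsup_spread_eq_0:
  assumes "\<forall>m. set (stake m \<omega>) \<subseteq> set_pmf D"
    and "(INF m. ennreal (spread n (gossip_run T S k0 x0 (stake m \<omega>)))) = 0"
  shows "limsup (\<lambda>k. ereal (spread n (gossip_state T S k0 x0 \<omega> k))) = 0"
proof -
  define h where "h m = spread n (gossip_run T S k0 x0 (stake m \<omega>))" for m
  have "h (Suc m) \<le> h m" for m
  proof -
    have "set [\<omega> !! m] \<subseteq> set_pmf D" using assms(1)[rule_format, of "Suc m"] unfolding stake_Suc by simp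
    then show ?thesis
      unfolding h_def stake_Suc gossip_run_append by (rule spread_gossip_run_support)
  qed
  then have "decseq (\<lambda>m. ennreal (h m))" by (intro decseq_SucI ennreal_leI)
  then have "(\<lambda>m. ennreal (h m)) \<longlonglongrightarrow> ennreal 0"
    using LIMSEQ_INF assms(2) unfolding h_def by fastforce
  then have "h \<longlonglongrightarrow> 0"
    by (rule tendsto_ennrealD) (simp_all add: h_def spread_nonneg[OF n_pos])
  moreover have "spread n (gossip_state T S k0 x0 \<omega> (k + k0)) = h k" for k
    by (simp add: h_def gossip_state_def gossip_traj_eq_run)
  ultimately have "(\<lambda>k. spread n (gossip_state T S k0 x0 \<omega> (k + k0))) \<longlonglongrightarrow> 0"
    by simp
  then have "(\<lambda>k. ereal (spread n (gossip_state T S k0 x0 \<omega> k))) \<longlonglongrightarrow> ereal 0"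
    by (intro tendsto_ereal) (rule LIMSEQ_offset)
  then show ?thesis
    by (simp add: lim_imp_Limsup zero_ereal_def)
qed

theorem prob_limsup_spread_eq_1:
  assumes "\<not> summable (\<lambda>k. window_prod (k * (n - 1)))"
  shows "\<P>(\<omega> in paths. limsup (\<lambda>k. ereal (spread n (gossip_state T S k0 x0 \<omega> k))) = 0) = 1"
proof -
  define L where "L \<omega> = (INF m. ennreal (spread n (gossip_run T S k0 x0 (stake m \<omega>))))" for \<omega>
  define c where "c j = p_min ^ (n - 1) * window_prod ((k0 + j) * (n - 1))" for j
  have L_bound: "(\<integral>\<^sup>+\<omega>. L \<omega> \<partial>paths) \<le> ennreal (spread n x0 * (\<Prod>j<d. 1 - c j))" for d
  proof -
    \<comment> \<open>after \<open>k0 (n - 1) - k0\<close> steps the windows line up with the blocks \<open>[k (n - 1), (k + 1) (n - 1))\<close>\<close>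
    have "1 \<le> n - 1" using n_ge_2 by arith
    then have "k0 \<le> k0 * (n - 1)" by simp
    then have "k0 + (k0 * (n - 1) - k0) + j * (n - 1) = (k0 + j) * (n - 1)" for j
      by (simp only: le_add_diff_inverse add_mult_distrib)
    then have "expected_spread k0 x0 (k0 * (n - 1) - k0 + d * (n - 1))
                 \<le> ennreal (spread n x0 * (\<Prod>j<d. 1 - c j))"
      using expected_spread_windows[of k0 x0 "k0 * (n - 1) - k0" d] by (simp add: c_def)
    moreover have "(\<integral>\<^sup>+\<omega>. L \<omega> \<partial>paths) \<le> expected_spread k0 x0 m" for m
      unfolding L_def expected_spread_def by (intro nn_integral_mono INF_lower) simp
    ultimately show ?thesis by (blast intro: order_trans)
  qed
  have "(\<lambda>d. \<Prod>j<d. 1 - c j) \<longlonglongrightarrow> 0"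
  proof (rule prod_one_minus_LIMSEQ_zero)
    show "0 \<le> c j" "c j \<le> 1" for j
      unfolding c_def using window_factor_nonneg p_min_pos window_prod_nonneg by simp_all
    have "summable (\<lambda>j. window_prod ((j + k0) * (n - 1))) \<Longrightarrow> False"
      using assms summable_iff_shift[of "\<lambda>k. window_prod (k * (n - 1))" k0] by simp
    then show "\<not> summable c"
      unfolding c_def using p_min_pos by (auto simp: summable_cmult_iff add.commute)
  qed
  then have "(\<lambda>d. ennreal (spread n x0 * (\<Prod>j<d. 1 - c j))) \<longlonglongrightarrow> ennreal 0"
    by (intro tendsto_ennrealI tendsto_mult_right_zero)
  then have "(\<integral>\<^sup>+\<omega>. L \<omega> \<partial>paths) \<le> 0"
    using L_bound by (intro LIMSEQ_le_const) auto
  moreover have "L \<in> borel_measurable paths"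
    unfolding L_def by (intro borel_measurable_INF measurable_stake_pmf_comp) auto
  ultimately have "AE \<omega> in paths. L \<omega> = 0"
    by (simp add: nn_integral_0_iff_AE)
  then have "AE \<omega> in paths. limsup (\<lambda>k. ereal (spread n (gossip_state T S k0 x0 \<omega> k))) = 0"
    using AE_paths_support by eventually_elim (simp add: L_def limsup_spread_eq_0)
  moreover have "(\<lambda>\<omega>. ereal (spread n (gossip_state T S k0 x0 \<omega> k))) \<in> borel_measurable paths" for k
    unfolding gossip_state_def gossip_traj_eq_run by (rule measurable_stake_pmf_comp)
  then have "(\<lambda>\<omega>. limsup (\<lambda>k. ereal (spread n (gossip_state T S k0 x0 \<omega> k)))) \<in> borel_measurable paths"
    unfolding limsup_INF_SUP by (intro borel_measurable_INF borel_measurable_SUP) auto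
  then have "{\<omega> \<in> space paths. limsup (\<lambda>k. ereal (spread n (gossip_state T S k0 x0 \<omega> k))) = 0}
               \<in> sets paths"
    by measurable
  ultimately show ?thesis using paths.prob_Collect_eq_1 by simp
qed

lemma not_summable_window_prod:
  assumes "(\<Sum>k. ennreal (\<Prod>s\<in>{k * (n - 1) ..< (k + 1) * (n - 1)}. T s * (1 - T s))) = \<infinity>"
  shows "\<not> summable (\<lambda>k. window_prod (k * (n - 1)))"
proof
  let ?w = "\<lambda>k. \<Prod>s\<in>{k * (n - 1) ..< (k + 1) * (n - 1)}. T s * (1 - T s)"
  assume "summable (\<lambda>k. window_prod (k * (n - 1)))"
  moreover have "0 \<le> ?w k" "?w k \<le> window_prod (k * (n - 1))" for k
  proof -
    have window: "(k + 1) * (n - 1) = k * (n - 1) + (n - 1)" by (simp only: add_mult_distrib mult_1_left)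
    have "0 \<le> T s * (1 - T s) \<and> T s * (1 - T s) \<le> T s" for s
      using T_range[of s] by (simp add: mult_left_le)
    then show "0 \<le> ?w k" "?w k \<le> window_prod (k * (n - 1))"
      unfolding window_prod_def window by (simp_all add: prod_nonneg prod_mono)
  qed
  ultimately have "summable ?w"
    using summable_comparison_test'[where g = "\<lambda>k. window_prod (k * (n - 1))" and N = 0 and f = ?w]
    by simp
  then have "(\<Sum>k. ennreal (?w k)) \<noteq> \<top>"
    using \<open>\<And>k. 0 \<le> ?w k\<close> by (rule ennreal_suminf_neq_top)
  then show False using assms by simp
qed

end

theorem proposition2:
  fixes n :: nat and a :: "nat \<Rightarrow> nat \<Rightarrow> real"
    and J :: "(act \<times> act) pmf" and D :: "step pmf"
    and \<alpha> \<beta> \<gamma> :: real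
    and T S :: "nat \<Rightarrow> real"
  assumes n3: "n \<ge> 3"
    and stoch: "stochastic_matrix n a"
    and D_def: "\<And>i j ei ej. pmf D (i, j, ei, ej) =
                 (if i < n \<and> j < n then (1 / real n) * a i j * pmf J (ei, ej) else 0)"
    and alpha_pos: "\<alpha> > 0"
    and sum1: "\<alpha> + \<beta> + \<gamma> = 1"
    and marg_i: "pmf (map_pmf fst J) Att = \<alpha>" "pmf (map_pmf fst J) Neu = \<beta>"
                "pmf (map_pmf fst J) Rep = \<gamma>"
    and marg_j: "pmf (map_pmf snd J) Att = \<alpha>" "pmf (map_pmf snd J) Neu = \<beta>"
                "pmf (map_pmf snd J) Rep = \<gamma>"
    and T_range: "\<And>k. 0 < T k \<and> T k \<le> 1"
    and S_pos: "\<And>k. S k > 0"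
    and A1: "weakly_connected n a"
    and A2: "\<gamma> = 0"
    and A4: "pmf J (Att, Att) = 0"
    and div: "(\<Sum>k. ennreal (\<Prod>s\<in>{k * (n - 1) ..< (k + 1) * (n - 1)}. T s * (1 - T s))) = \<infinity>"
  shows "\<forall>k0 (x0 :: nat \<Rightarrow> real).
           \<P>(\<omega> in stream_space (measure_pmf D).
               limsup (\<lambda>k. ereal (spread n (gossip_state T S k0 x0 \<omega> k))) = 0) = 1"
proof -
  have no_Rep: "pmf (map_pmf fst J) Rep = 0" "pmf (map_pmf snd J) Rep = 0"
    using marg_i(3) marg_j(3) A2 by simp_all
  interpret gossip_model n a J D T S
  proof
    show "2 \<le> n" using n3 by simp
    show "fst e \<noteq> Rep \<and> snd e \<noteq> Rep" if "e \<in> set_pmf J" for e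
      using not_Rep_of_marginal[OF no_Rep(1) that] not_Rep_of_marginal[OF no_Rep(2) that] by simp
    show "0 < pmf J (Att, Neu)" "0 < pmf J (Neu, Att)"
      using pmf_attraction_eq_marginal[OF A4 no_Rep] marg_i(1) marg_j(1) alpha_pos by simp_all
    show "0 \<le> T k \<and> T k \<le> 1" for k using T_range[of k] by simp
  qed (use D_def A1 in simp_all)
  show ?thesis using prob_limsup_spread_eq_1[OF not_summable_window_prod[OF div]] by blast
qed
end
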